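(* Let $V$ be a finite ground set with $n=|V|$, let $f:2^V\to\mathbb{R}_{\ge 0}$ be monotone submodular, let $k\ge1$ and $t\ge 1$ be integers, and let $OPT=\max_{A\subseteq V,|A|\le k} f(A)$. For $1\le\ell\le t$ let $\alpha_\ell=\left(1-\frac{1}{t+1}\right)^\ell\frac{OPT}{k}$. Run the following randomized procedure (Algorithm 2): set $G=\emptyset$; for $\ell=1,\dots,t$: (i) draw a fresh random set $S\subseteq V$ containing each element independently with probability $p=4\sqrt{k/n}$, and partition $V$ at random into sets $V_1,\dots,V_m$; (ii) compute $G_0=\textsc{ThresholdGreedy}(S,G,\alpha_\ell)$; (iii) for each $i$, set $R_i=\textsc{ThresholdFilter}(V_i,G_0,\alpha_\ell)$ if $|G_0|<k$ and $R_i=\emptyset$ otherwise; (iv) set $G=\textsc{ThresholdGreedy}\big(\bigcup_i R_i,\,G_0,\,\alpha_\ell\big)$. Output $G$. Then the approximation ratio of this algorithm is at least $1-\left(1-\frac{1}{t+1}\right)^t$; namely, for every outcome of the random choices, $f(G)\ge\left(1-\left(1-\frac{1}{t+1}\right)^t\right)OPT$.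
   Context: A function $f:2^V\to\mathbb{R}_{\ge0}$ is submodular if $f(A\cup\{e\})-f(A)\ge f(B\cup\{e\})-f(B)$ for all $A\subseteq B\subseteq V$ and $e\notin B$, and monotone if $f(A\cup\{e\})-f(A)\ge 0$ for all $A$ and $e\notin A$. For $A\subseteq V$, $e\in V$ write $f_A(e)=f(A\cup\{e\})-f(A)$. Fix a total order on $V$; all sets are scanned in this order. $\textsc{ThresholdGreedy}(T,G,\tau)$ (for $|G|\le k$): start with $G'=G$; scan $e\in T$ in the fixed order, and whenever $f_{G'}(e)\ge\tau$ and $|G'|<k$, add $e$ to $G'$; return $G'$. $\textsc{ThresholdFilter}(T,G,\tau)$ returns $\{e\in T: f_G(e)\ge\tau\}$. Here $m$ is the number of machines (the paper takes $m=\sqrt{n/k}$). *)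

theory Defs
  imports Complex_Main
begin

definition nonneg_on :: "'a set \<Rightarrow> ('a set \<Rightarrow> real) \<Rightarrow> bool" where
  "nonneg_on V f \<longleftrightarrow> (\<forall>A. A \<subseteq> V \<longrightarrow> f A \<ge> 0)"

definition monotone_on_sets :: "'a set \<Rightarrow> ('a set \<Rightarrow> real) \<Rightarrow> bool" where
  "monotone_on_sets V f \<longleftrightarrow>
     (\<forall>A e. A \<subseteq> V \<longrightarrow> e \<in> V - A \<longrightarrow> f (insert e A) - f A \<ge> 0)"

definition submodular_on :: "'a set \<Rightarrow> ('a set \<Rightarrow> real) \<Rightarrow> bool" where
  "submodular_on V f \<longleftrightarrow>
     (\<forall>A B e. A \<subseteq> B \<longrightarrow> B \<subseteq> V \<longrightarrow> e \<in> V - B \<longrightarrow>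
        f (insert e A) - f A \<ge> f (insert e B) - f B)"

definition OPT :: "'a set \<Rightarrow> ('a set \<Rightarrow> real) \<Rightarrow> nat \<Rightarrow> real" where
  "OPT V f k = Max {f A | A. A \<subseteq> V \<and> card A \<le> k}"

text \<open>The fixed total order on V is given by a distinct list ord enumerating V;
  a set T is scanned by going through ord and looking only at elements of T.\<close>
definition threshold_greedy ::
  "('a set \<Rightarrow> real) \<Rightarrow> nat \<Rightarrow> 'a list \<Rightarrow> 'a set \<Rightarrow> 'a set \<Rightarrow> real \<Rightarrow> 'a set" where
  "threshold_greedy f k ord T G \<tau> =
     foldl (\<lambda>G' e. if e \<in> T \<and> f (insert e G') - f G' \<ge> \<tau> \<and> card G' < k
                   then insert e G' else G') G ord"

definition threshold_filter ::
  "('a set \<Rightarrow> real) \<Rightarrow> 'a set \<Rightarrow> 'a set \<Rightarrow> real \<Rightarrow> 'a set" where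
  "threshold_filter f T G \<tau> = {e \<in> T. f (insert e G) - f G \<ge> \<tau>}"

definition alg_round ::
  "('a set \<Rightarrow> real) \<Rightarrow> nat \<Rightarrow> 'a list \<Rightarrow> nat \<Rightarrow> real \<Rightarrow> 'a set \<Rightarrow> (nat \<Rightarrow> 'a set)
     \<Rightarrow> 'a set \<Rightarrow> 'a set" where
  "alg_round f k ord m \<tau> S P G =
     (let G0 = threshold_greedy f k ord S G \<tau>;
          R = (\<lambda>i. if card G0 < k then threshold_filter f (P i) G0 \<tau> else {})
      in threshold_greedy f k ord (\<Union>i<m. R i) G0 \<tau>)"

definition alpha :: "nat \<Rightarrow> real \<Rightarrow> nat \<Rightarrow> nat \<Rightarrow> real" where
  "alpha t opt k l = (1 - 1 / (real t + 1)) ^ l * opt / real k"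

text \<open>State G after the first l rounds, for the outcome S (samples), P (partitions)
  of the random choices; S l and P l are used in round l (1-based).\<close>
primrec alg_state ::
  "'a set \<Rightarrow> ('a set \<Rightarrow> real) \<Rightarrow> nat \<Rightarrow> nat \<Rightarrow> 'a list \<Rightarrow> nat \<Rightarrow> (nat \<Rightarrow> 'a set)
     \<Rightarrow> (nat \<Rightarrow> nat \<Rightarrow> 'a set) \<Rightarrow> nat \<Rightarrow> 'a set" where
  "alg_state V f k t ord m S P 0 = {}"
| "alg_state V f k t ord m S P (Suc l) =
     alg_round f k ord m (alpha t (OPT V f k) k (Suc l)) (S (Suc l)) (P (Suc l))
       (alg_state V f k t ord m S P l)"

end

theory Submission
  imports Defs
begin

text \<open>Write \<open>r = 1 - 1/(t+1)\<close>, so that \<open>k \<alpha>(l) = r^l OPT\<close>, and let \<open>G(i)\<close> be the solution after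
  round \<open>i\<close>. Every element added in round \<open>l\<close> gains at least \<open>\<alpha>(l)\<close>, and if round \<open>l\<close> ends with
  \<open>|G(l)| < k\<close> then every element has marginal gain below \<open>\<alpha>(l)\<close>, so by submodularity
  \<open>f(G(l)) \<ge> OPT - k \<alpha>(l) = (1 - r^l) OPT\<close>; for \<open>l = t\<close> this is the claim.
  Otherwise, while \<open>|G(i)| < k\<close> the potential \<open>\<Phi>(i) = f(G(i)) - \<alpha>(i+1) |G(i)|\<close> satisfies
  \<open>\<Phi>(i+1) \<ge> r \<Phi>(i) + (1 - r) f(G(i+1))\<close>, whence \<open>\<Phi>(i) \<ge> (1 - r^(i+1) - (i+1)(1-r) r^i) OPT\<close>.
  In the round \<open>i+1\<close> that fills \<open>G\<close>, the missing \<open>k - |G(i)|\<close> elements each gain \<open>\<alpha>(i+1)\<close>,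
  giving \<open>f(G(i+1)) \<ge> (1 - (i+1)(1-r) r^i) OPT\<close>, and \<open>(i+1)(1-r) r^i \<le> r^t\<close> by Bernoulli's
  inequality.\<close>

lemma submodular_onD:
  "submodular_on V f \<Longrightarrow> A \<subseteq> B \<Longrightarrow> B \<subseteq> V \<Longrightarrow> e \<in> V - B \<Longrightarrow>
     f (insert e B) - f B \<le> f (insert e A) - f A"
  unfolding submodular_on_def by blast

lemma monotone_on_sets_Un:
  assumes mono: "monotone_on_sets V f" and "finite D" "A \<union> D \<subseteq> V"
  shows "f A \<le> f (A \<union> D)"
  using assms(2,3)
proof (induction D rule: finite_induct)
  case (insert x D)
  then have "f (A \<union> D) \<le> f (insert x (A \<union> D))"
    using mono unfolding monotone_on_sets_def by (cases "x \<in> A \<union> D") (auto simp: insert_absorb)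
  with insert show ?case by simp
qed simp

lemma submodular_on_Un_le_sum:
  assumes sub: "submodular_on V f" and "finite D" "G \<union> D \<subseteq> V"
  shows "f (G \<union> D) - f G \<le> (\<Sum>e\<in>D. f (insert e G) - f G)"
  using assms(2,3)
proof (induction D rule: finite_induct)
  case (insert x D)
  have "f (insert x (G \<union> D)) - f (G \<union> D) \<le> f (insert x G) - f G"
  proof (cases "x \<in> G")
    case False
    then show ?thesis using submodular_onD[OF sub, of G "G \<union> D" x] insert by auto
  qed (simp add: insert_absorb)
  with insert show ?case by simp
qed simp

lemma OPT_attained:
  assumes "finite V"
  obtains A where "A \<subseteq> V" "card A \<le> k" "f A = OPT V f k"
proof -
  have image: "{f A | A. A \<subseteq> V \<and> card A \<le> k} = f ` {A. A \<subseteq> V \<and> card A \<le> k}" by auto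
  have "finite {A. A \<subseteq> V \<and> card A \<le> k}" "{} \<in> {A. A \<subseteq> V \<and> card A \<le> k}"
    using assms by simp_all
  then have "OPT V f k \<in> f ` {A. A \<subseteq> V \<and> card A \<le> k}"
    unfolding OPT_def image by (intro Max_in) auto
  with that show ?thesis by auto
qed

lemma OPT_ge: "finite V \<Longrightarrow> A \<subseteq> V \<Longrightarrow> card A \<le> k \<Longrightarrow> f A \<le> OPT V f k"
  unfolding OPT_def by (rule Max_ge) auto

lemma OPT_le_of_marginals_le:
  assumes sub: "submodular_on V f" and mono: "monotone_on_sets V f" and "finite V" "G \<subseteq> V"
    and marginal: "\<And>e. e \<in> V - G \<Longrightarrow> f (insert e G) - f G \<le> \<tau>" and "0 \<le> \<tau>"
  shows "OPT V f k \<le> f G + real k * \<tau>"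
proof -
  obtain A where A: "A \<subseteq> V" "card A \<le> k" "f A = OPT V f k"
    using OPT_attained[OF \<open>finite V\<close>] .
  have "finite A" using A(1) \<open>finite V\<close> by (rule finite_subset)
  have "finite G" using assms(4) \<open>finite V\<close> by (rule finite_subset)
  have "OPT V f k \<le> f (G \<union> A)"
    using monotone_on_sets_Un[OF mono \<open>finite G\<close>, of A] A assms(4) by (simp add: Un_commute)
  also have "\<dots> \<le> f G + (\<Sum>e\<in>A. f (insert e G) - f G)"
    using submodular_on_Un_le_sum[OF sub \<open>finite A\<close>] A(1) assms(4) by (simp add: diff_le_eq add.commute)
  also have "(\<Sum>e\<in>A. f (insert e G) - f G) \<le> real (card A) * \<tau>"
    using marginal A(1) \<open>0 \<le> \<tau>\<close>
    by (intro sum_bounded_above) (metis Diff_iff diff_self insert_absorb subsetD)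
  also have "\<dots> \<le> real k * \<tau>"
    using A(2) \<open>0 \<le> \<tau>\<close> by (simp add: mult_right_mono)
  finally show ?thesis by simp
qed

definition greedy_step :: "('a set \<Rightarrow> real) \<Rightarrow> nat \<Rightarrow> 'a set \<Rightarrow> real \<Rightarrow> 'a set \<Rightarrow> 'a \<Rightarrow> 'a set" where
  "greedy_step f k T \<tau> G e =
     (if e \<in> T \<and> \<tau> \<le> f (insert e G) - f G \<and> card G < k then insert e G else G)"

lemma threshold_greedy_Nil [simp]: "threshold_greedy f k [] T G \<tau> = G"
  by (simp add: threshold_greedy_def)

lemma threshold_greedy_Cons [simp]:
  "threshold_greedy f k (e # es) T G \<tau> = threshold_greedy f k es T (greedy_step f k T \<tau> G e) \<tau>"
  by (simp add: threshold_greedy_def greedy_step_def)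

lemma threshold_greedy_subset: "G \<subseteq> threshold_greedy f k es T G \<tau>"
proof (induction es arbitrary: G)
  case (Cons e es)
  show ?case using Cons.IH[of "greedy_step f k T \<tau> G e"] by (auto simp: greedy_step_def)
qed simp

lemma threshold_greedy_subset_Un: "threshold_greedy f k es T G \<tau> \<subseteq> G \<union> (set es \<inter> T)"
proof (induction es arbitrary: G)
  case (Cons e es)
  show ?case using Cons.IH[of "greedy_step f k T \<tau> G e"] by (auto simp: greedy_step_def)
qed simp

lemma threshold_greedy_subset_V:
  "G \<subseteq> V \<Longrightarrow> set es \<subseteq> V \<Longrightarrow> threshold_greedy f k es T G \<tau> \<subseteq> V"
  using threshold_greedy_subset_Un[of f k es T G \<tau>] by blast

lemma finite_threshold_greedy: "finite G \<Longrightarrow> finite (threshold_greedy f k es T G \<tau>)"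
  using threshold_greedy_subset_Un by (rule finite_subset) simp

lemma card_threshold_greedy_le:
  "finite G \<Longrightarrow> card G \<le> k \<Longrightarrow> card (threshold_greedy f k es T G \<tau>) \<le> k"
  by (induction es arbitrary: G) (auto simp: greedy_step_def card_insert_if)

lemma threshold_greedy_gain:
  assumes "finite G"
  shows "\<tau> * (real (card (threshold_greedy f k es T G \<tau>)) - real (card G))
           \<le> f (threshold_greedy f k es T G \<tau>) - f G"
  using assms
proof (induction es arbitrary: G)
  case (Cons e es)
  define G1 where "G1 = greedy_step f k T \<tau> G e"
  have "\<tau> * (real (card G1) - real (card G)) \<le> f G1 - f G"
    using Cons.prems by (auto simp: G1_def greedy_step_def card_insert_if insert_absorb)
  moreover have "\<tau> * (real (card (threshold_greedy f k es T G1 \<tau>)) - real (card G1))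
      \<le> f (threshold_greedy f k es T G1 \<tau>) - f G1"
    using Cons.IH Cons.prems by (simp add: G1_def greedy_step_def)
  ultimately show ?case
    by (simp add: G1_def[symmetric] algebra_simps)
qed simp

lemma threshold_greedy_marginal_less:
  assumes sub: "submodular_on V f" and "finite G" "G \<subseteq> V" "set es \<subseteq> V"
    and "card (threshold_greedy f k es T G \<tau>) < k" "e \<in> set es \<inter> T"
    and "e \<notin> threshold_greedy f k es T G \<tau>"
  shows "f (insert e (threshold_greedy f k es T G \<tau>)) - f (threshold_greedy f k es T G \<tau>) < \<tau>"
  using assms(2-)
proof (induction es arbitrary: G)
  case (Cons x es)
  define G1 where "G1 = greedy_step f k T \<tau> G x"
  define H where "H = threshold_greedy f k es T G1 \<tau>"
  have G1: "finite G1" "G1 \<subseteq> V" "G \<subseteq> G1"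
    using Cons.prems by (auto simp: G1_def greedy_step_def)
  have H: "G1 \<subseteq> H" "H \<subseteq> V" "finite H" "card H < k" "e \<notin> H"
  proof -
    show "G1 \<subseteq> H" unfolding H_def by (rule threshold_greedy_subset)
    have "set es \<subseteq> V" using Cons.prems(3) by simp
    with G1(2) show "H \<subseteq> V" unfolding H_def by (rule threshold_greedy_subset_V)
    show "finite H" unfolding H_def using G1(1) by (rule finite_threshold_greedy)
    show "card H < k" "e \<notin> H" using Cons.prems(4,6) by (simp_all add: H_def G1_def)
  qed
  show ?case
  proof (cases "e \<in> set es")
    case True
    then show ?thesis using Cons.IH[OF G1(1,2)] Cons.prems by (simp add: G1_def)
  next
    case False
    then have "e = x" "e \<in> T" "e \<in> V" using Cons.prems by auto
    have "card G < k"
      using card_mono[OF \<open>finite H\<close>] G1(3) H(1,4) by (meson le_less_trans order_trans)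
    have "f (insert e G) - f G < \<tau>"
    proof (rule ccontr)
      assume "\<not> f (insert e G) - f G < \<tau>"
      then have "G1 = insert e G"
        using \<open>e = x\<close> \<open>e \<in> T\<close> \<open>card G < k\<close> by (simp add: G1_def greedy_step_def)
      with H(1,5) show False by auto
    qed
    moreover have "f (insert e H) - f H \<le> f (insert e G) - f G"
      using sub G1(3) H(1,2,5) \<open>e \<in> V\<close> by (intro submodular_onD) auto
    ultimately show ?thesis by (simp add: H_def G1_def)
  qed
qed simp

lemma alg_round_eq:
  "alg_round f k ord m \<tau> T Q G =
     threshold_greedy f k ord
       (\<Union>i<m. if card (threshold_greedy f k ord T G \<tau>) < k
               then threshold_filter f (Q i) (threshold_greedy f k ord T G \<tau>) \<tau> else {})
       (threshold_greedy f k ord T G \<tau>) \<tau>"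
  by (simp add: alg_round_def Let_def)

lemma alg_round_subset: "G \<subseteq> alg_round f k ord m \<tau> T Q G"
  unfolding alg_round_eq by (rule subset_trans[OF threshold_greedy_subset threshold_greedy_subset])

lemma alg_round_subset_V: "G \<subseteq> V \<Longrightarrow> set ord \<subseteq> V \<Longrightarrow> alg_round f k ord m \<tau> T Q G \<subseteq> V"
  unfolding alg_round_eq by (intro threshold_greedy_subset_V)

lemma finite_alg_round: "finite G \<Longrightarrow> finite (alg_round f k ord m \<tau> T Q G)"
  unfolding alg_round_eq by (intro finite_threshold_greedy)

lemma card_alg_round_le: "finite G \<Longrightarrow> card G \<le> k \<Longrightarrow> card (alg_round f k ord m \<tau> T Q G) \<le> k"
  unfolding alg_round_eq by (intro card_threshold_greedy_le finite_threshold_greedy)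

lemma alg_round_gain:
  assumes "finite G"
  shows "\<tau> * (real (card (alg_round f k ord m \<tau> T Q G)) - real (card G))
           \<le> f (alg_round f k ord m \<tau> T Q G) - f G"
proof -
  define G0 where "G0 = threshold_greedy f k ord T G \<tau>"
  define R where "R = (\<Union>i<m. if card G0 < k then threshold_filter f (Q i) G0 \<tau> else {})"
  have "finite G0" unfolding G0_def using assms by (rule finite_threshold_greedy)
  from threshold_greedy_gain[OF assms, of \<tau> f k ord T] threshold_greedy_gain[OF this, of \<tau> f k ord R]
  show ?thesis unfolding alg_round_eq G0_def[symmetric] R_def[symmetric] by (simp add: algebra_simps)
qed

lemma alg_round_marginal_less:
  assumes sub: "submodular_on V f" and "finite G" "G \<subseteq> V" "set ord = V"
    and "V \<subseteq> (\<Union>i<m. Q i)"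
    and "card (alg_round f k ord m \<tau> T Q G) < k" "e \<in> V - alg_round f k ord m \<tau> T Q G"
  shows "f (insert e (alg_round f k ord m \<tau> T Q G)) - f (alg_round f k ord m \<tau> T Q G) < \<tau>"
proof -
  define G0 where "G0 = threshold_greedy f k ord T G \<tau>"
  define R where "R = (\<Union>i<m. if card G0 < k then threshold_filter f (Q i) G0 \<tau> else {})"
  define G' where "G' = threshold_greedy f k ord R G0 \<tau>"
  have G'_eq: "alg_round f k ord m \<tau> T Q G = G'"
    unfolding alg_round_eq G'_def R_def G0_def ..
  have G0: "finite G0" "G0 \<subseteq> V" "G0 \<subseteq> G'"
    using finite_threshold_greedy[OF \<open>finite G\<close>] threshold_greedy_subset_V[OF \<open>G \<subseteq> V\<close>]
      threshold_greedy_subset assms(4) by (simp_all add: G0_def G'_def)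
  have G': "finite G'" "G' \<subseteq> V" "card G' < k" "e \<in> V - G'"
    using finite_alg_round[OF \<open>finite G\<close>] alg_round_subset_V[OF \<open>G \<subseteq> V\<close>] assms(4,6,7)
    by (auto simp: G'_eq[symmetric])
  have "card G0 < k" using card_mono[OF G'(1) G0(3)] G'(3) by simp
  then have not_in_R: "f (insert e G0) - f G0 < \<tau>" if "e \<notin> R"
    using that G'(4) assms(5) by (force simp: R_def threshold_filter_def)
  show ?thesis
  proof (cases "e \<in> R")
    case True
    then show ?thesis
      using threshold_greedy_marginal_less[OF sub G0(1,2)] G' assms(4) by (simp add: G'_eq G'_def)
  next
    case False
    with not_in_R have "f (insert e G0) - f G0 < \<tau>" .
    moreover have "f (insert e G') - f G' \<le> f (insert e G0) - f G0"
      using submodular_onD[OF sub G0(3) G'(2,4)] .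
    ultimately show ?thesis by (simp add: G'_eq)
  qed
qed

lemma Bernoulli_weighted_power_le:
  fixes i t :: nat and r :: real
  assumes "i < t" and r: "r = 1 - 1 / (real t + 1)"
  shows "(real i + 1) * (1 - r) * r ^ i \<le> r ^ t"
proof -
  have "(real i + 1) * (1 - r) = 1 + real (t - i) * (- 1 / (real t + 1))"
    using \<open>i < t\<close> unfolding r by (simp add: field_simps of_nat_diff)
  also have "\<dots> \<le> (1 + (- 1 / (real t + 1))) ^ (t - i)"
    by (rule Bernoulli_inequality) (simp add: field_simps)
  also have "\<dots> = r ^ (t - i)" using r by simp
  finally have "(real i + 1) * (1 - r) * r ^ i \<le> r ^ (t - i) * r ^ i"
    using r by (intro mult_right_mono) simp_all
  also have "\<dots> = r ^ t" using \<open>i < t\<close> by (simp flip: power_add)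
  finally show ?thesis .
qed

text \<open>An abstract run of the algorithm: \<open>F i\<close> and \<open>c i\<close> are the value and the size of the
  solution after round \<open>i\<close>, and \<open>a j\<close> is the threshold of round \<open>j\<close>.\<close>

locale threshold_rounds =
  fixes F :: "nat \<Rightarrow> real" and c :: "nat \<Rightarrow> nat" and a :: "nat \<Rightarrow> real"
    and k t :: nat and r opt :: real
  assumes k_pos: "1 \<le> k" and opt_nonneg: "0 \<le> opt" and r_nonneg: "0 \<le> r" and r_le_1: "r \<le> 1"
    and k_times_threshold: "\<And>j. real k * a j = r ^ j * opt"
    and F_0: "0 \<le> F 0" and c_0: "c 0 = 0"
    and c_mono: "\<And>i. c i \<le> c (Suc i)" and c_le: "\<And>i. c i \<le> k"
    and gain: "\<And>i. a (Suc i) * (real (c (Suc i)) - real (c i)) \<le> F (Suc i) - F i"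
    and unfilled: "\<And>i. i < t \<Longrightarrow> c (Suc i) < k \<Longrightarrow> opt - real k * a (Suc i) \<le> F (Suc i)"
begin

lemma threshold_Suc: "a (Suc j) = r * a j"
proof -
  have "real k * a (Suc j) = real k * (r * a j)"
    using k_times_threshold[of j] k_times_threshold[of "Suc j"] by simp
  then show ?thesis using k_pos by simp
qed

lemma unfilled_potential:
  assumes "i \<le> t" "c i < k"
  shows "(1 - r ^ Suc i - (real i + 1) * (1 - r) * r ^ i) * opt \<le> F i - a (Suc i) * real (c i)"
  using assms
proof (induction i)
  case 0
  then show ?case using F_0 c_0 by simp
next
  case (Suc i)
  have IH: "(1 - r ^ Suc i - (real i + 1) * (1 - r) * r ^ i) * opt \<le> F i - a (Suc i) * real (c i)"
    using Suc.IH Suc.prems c_mono[of i] by simp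
  have filled: "(1 - r ^ Suc i) * opt \<le> F (Suc i)"
    using unfilled[of i] Suc.prems k_times_threshold[of "Suc i"] by (simp add: algebra_simps)
  have "(1 - r ^ Suc (Suc i) - (real (Suc i) + 1) * (1 - r) * r ^ Suc i) * opt
      = r * ((1 - r ^ Suc i - (real i + 1) * (1 - r) * r ^ i) * opt) + (1 - r) * ((1 - r ^ Suc i) * opt)"
    by (simp add: algebra_simps)
  also have "\<dots> \<le> r * (F i - a (Suc i) * real (c i)) + (1 - r) * F (Suc i)"
    using IH filled r_nonneg r_le_1 by (intro add_mono mult_left_mono) simp_all
  also have "\<dots> \<le> r * (F (Suc i) - a (Suc i) * real (c (Suc i))) + (1 - r) * F (Suc i)"
    using gain[of i] r_nonneg by (intro add_right_mono mult_left_mono) (simp_all add: algebra_simps)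
  also have "\<dots> = F (Suc i) - a (Suc (Suc i)) * real (c (Suc i))"
    by (simp add: threshold_Suc algebra_simps)
  finally show ?case .
qed

lemma filled_bound:
  assumes r: "r = 1 - 1 / (real t + 1)" and "i \<le> t" "c i = k"
  shows "(1 - r ^ t) * opt \<le> F i"
  using assms(2,3)
proof (induction i)
  case 0
  then show ?case using c_0 k_pos by simp
next
  case (Suc i)
  have full: "c (Suc i) = k" by fact
  show ?case
  proof (cases "c i = k")
    case True
    then show ?thesis using Suc.IH Suc.prems gain[of i] by simp
  next
    case False
    then have "c i < k" using c_le[of i] by simp
    have "(1 - r ^ t) * opt \<le> (1 - (real i + 1) * (1 - r) * r ^ i) * opt"
      using Bernoulli_weighted_power_le[OF _ r] Suc.prems opt_nonneg by (intro mult_right_mono) simp_all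
    also have "\<dots> = (1 - r ^ Suc i - (real i + 1) * (1 - r) * r ^ i) * opt + real k * a (Suc i)"
      using k_times_threshold[of "Suc i"] by (simp add: algebra_simps)
    also have "\<dots> \<le> F i - a (Suc i) * real (c i) + real k * a (Suc i)"
      using unfilled_potential[of i] \<open>c i < k\<close> Suc.prems by simp
    also have "\<dots> \<le> F (Suc i)"
      using gain[of i] full by (simp add: algebra_simps)
    finally show ?thesis .
  qed
qed

theorem final_bound:
  assumes "r = 1 - 1 / (real t + 1)" and "1 \<le> t"
  shows "(1 - r ^ t) * opt \<le> F t"
proof (cases "c t < k")
  case True
  obtain i where "t = Suc i" using \<open>1 \<le> t\<close> by (cases t) auto
  then show ?thesis using unfilled[of i] True k_times_threshold[of t] by (simp add: algebra_simps)
next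
  case False
  then show ?thesis using filled_bound[OF assms(1)] c_le[of t] by simp
qed

end

lemma alg_state_subset: "set ord \<subseteq> V \<Longrightarrow> alg_state V f k t ord m S P i \<subseteq> V"
  by (induction i) (simp_all add: alg_round_subset_V)

lemma card_alg_state_le:
  "finite V \<Longrightarrow> set ord \<subseteq> V \<Longrightarrow> card (alg_state V f k t ord m S P i) \<le> k"
proof (induction i)
  case (Suc i)
  have "finite (alg_state V f k t ord m S P i)"
    using alg_state_subset[OF Suc.prems(2)] Suc.prems(1) by (rule finite_subset)
  with Suc show ?case by (simp add: card_alg_round_le)
qed simp

lemma threshold_rounds_alg_state:
  assumes "finite V" "set ord = V"
    and "nonneg_on V f" "monotone_on_sets V f" "submodular_on V f" "1 \<le> k"
    and cover: "\<And>l. l \<in> {1..t} \<Longrightarrow> V \<subseteq> (\<Union>i<m. P l i)"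
  shows "threshold_rounds (\<lambda>i. f (alg_state V f k t ord m S P i))
           (\<lambda>i. card (alg_state V f k t ord m S P i)) (alpha t (OPT V f k) k) k t
           (1 - 1 / (real t + 1)) (OPT V f k)"
proof -
  let ?G = "alg_state V f k t ord m S P" and ?opt = "OPT V f k"
  have G_V: "?G i \<subseteq> V" for i
    by (rule alg_state_subset) (simp add: assms(2))
  have G_finite: "finite (?G i)" for i
    using G_V assms(1) by (rule finite_subset)
  have "0 \<le> f {}" using assms(3) by (simp add: nonneg_on_def)
  also have "f {} \<le> ?opt" by (rule OPT_ge[OF assms(1)]) simp_all
  finally have "0 \<le> ?opt" .
  then have threshold_nonneg: "0 \<le> alpha t ?opt k j" for j
    by (simp add: alpha_def)
  show ?thesis
  proof
    show "1 \<le> k" "0 \<le> ?opt" by fact+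
    show "0 \<le> 1 - 1 / (real t + 1)" "1 - 1 / (real t + 1) \<le> 1" by simp_all
    show "real k * alpha t ?opt k j = (1 - 1 / (real t + 1)) ^ j * ?opt" for j
      using assms(6) by (simp add: alpha_def)
    show "0 \<le> f (?G 0)" "card (?G 0) = 0"
      using assms(3) by (simp_all add: nonneg_on_def)
    show "card (?G i) \<le> card (?G (Suc i))" for i
      by (rule card_mono[OF G_finite]) (simp add: alg_round_subset)
    show "card (?G i) \<le> k" for i
      using assms(1,2) by (intro card_alg_state_le) simp_all
    show "alpha t ?opt k (Suc i) * (real (card (?G (Suc i))) - real (card (?G i)))
        \<le> f (?G (Suc i)) - f (?G i)" for i
      using alg_round_gain[OF G_finite] by simp
    show "?opt - real k * alpha t ?opt k (Suc i) \<le> f (?G (Suc i))"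
      if "i < t" "card (?G (Suc i)) < k" for i
    proof -
      have "V \<subseteq> (\<Union>j<m. P (Suc i) j)" using cover[of "Suc i"] \<open>i < t\<close> by simp
      from alg_round_marginal_less[OF assms(5) G_finite G_V assms(2) this]
      have "f (insert e (?G (Suc i))) - f (?G (Suc i)) \<le> alpha t ?opt k (Suc i)"
        if "e \<in> V - ?G (Suc i)" for e
        using that \<open>card (?G (Suc i)) < k\<close> by (simp add: less_imp_le)
      from OPT_le_of_marginals_le[OF assms(5,4,1) G_V this threshold_nonneg, of k]
      show ?thesis by simp
    qed
  qed
qed

theorem lemma3:
  fixes V :: "'a set" and f :: "'a set \<Rightarrow> real" and k t m :: nat
    and ord :: "'a list" and S :: "nat \<Rightarrow> 'a set" and P :: "nat \<Rightarrow> nat \<Rightarrow> 'a set"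
  assumes "finite V"
    and "set ord = V" and "distinct ord"
    and "nonneg_on V f" and "monotone_on_sets V f" and "submodular_on V f"
    and "k \<ge> 1" and "t \<ge> 1"
    and "\<And>l. l \<in> {1..t} \<Longrightarrow> S l \<subseteq> V"
    and "\<And>l. l \<in> {1..t} \<Longrightarrow> (\<Union>i<m. P l i) = V"
    and "\<And>l. l \<in> {1..t} \<Longrightarrow> (\<forall>i<m. \<forall>j<m. i \<noteq> j \<longrightarrow> P l i \<inter> P l j = {})"
  shows "f (alg_state V f k t ord m S P t) \<ge> (1 - (1 - 1 / (real t + 1)) ^ t) * OPT V f k"
proof -
  have "threshold_rounds (\<lambda>i. f (alg_state V f k t ord m S P i))
      (\<lambda>i. card (alg_state V f k t ord m S P i)) (alpha t (OPT V f k) k) k t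
      (1 - 1 / (real t + 1)) (OPT V f k)"
    by (rule threshold_rounds_alg_state[OF assms(1,2,4-7)]) (simp add: assms(10))
  from threshold_rounds.final_bound[OF this refl assms(8)] show ?thesis .
qed

end
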